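(* Let $G$ be a countable vertex set with fixed vertex $o$, and let $c,b$ be conductance functions on $G$ with $b_{xy}\le c_{xy}$ for all $x,y$, such that $(G,c)$ and $(G,b)$ are connected locally finite networks. Let $\Delta_b^{(c)}$ denote the adjoint of $\Delta_b$ with respect to the inner product of $\mathcal H_{\mathcal E_c}$, i.e. $\langle \Delta_b^{(c)}w,u\rangle_{\mathcal E_c}=\langle w,\Delta_b u\rangle_{\mathcal E_c}$. Then $\mathrm{span}\{v_x^{(c)}\}_{x\in G}\subseteq\mathrm{dom}\,\Delta_b^{(c)}$ and $\Delta_b^{(c)}v_x^{(c)}=\mathcal I^*(\delta_x-\delta_o)$ for every $x\in G$, where $\mathcal I^*:\mathcal H_{\mathcal E_b}\to\mathcal H_{\mathcal E_c}$ is the adjoint of the inclusion $\mathcal I:\mathcal H_{\mathcal E_c}\to\mathcal H_{\mathcal E_b}$.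
   Context: A conductance function on a countable set $G$ is a symmetric map $c:G\times G\to[0,\infty)$ with $c_{xx}=0$; $x\sim y$ iff $c_{xy}>0$; locally finite and connected. $\mathcal E_c(u,v)=\frac12\sum_{x,y}c_{xy}\overline{(u(x)-u(y))}(v(x)-v(y))$; $\mathcal H_{\mathcal E_c}$ is the Hilbert space of finite-energy functions modulo constants with inner product $\mathcal E_c$. $v_x^{(c)}$ is the unique element of $\mathcal H_{\mathcal E_c}$ with $\langle v_x^{(c)},u\rangle_{\mathcal E_c}=u(x)-u(o)$ for all $u$. The Laplacian is $(\Delta_b v)(x)=\sum_{y}b_{xy}(v(x)-v(y))$. $\delta_x$ is the indicator function of $\{x\}$, viewed in $\mathcal H_{\mathcal E_b}$. Same notation for $b$. *)

theory Defs
  imports "HOL-Analysis.Analysis"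
begin

definition conductance :: "('a \<Rightarrow> 'a \<Rightarrow> real) \<Rightarrow> bool" where
  "conductance c \<longleftrightarrow> (\<forall>x y. c x y = c y x) \<and> (\<forall>x y. 0 \<le> c x y) \<and> (\<forall>x. c x x = 0)"

definition locally_finite :: "('a \<Rightarrow> 'a \<Rightarrow> real) \<Rightarrow> bool" where
  "locally_finite c \<longleftrightarrow> (\<forall>x. finite {y. 0 < c x y})"

definition net_connected :: "('a \<Rightarrow> 'a \<Rightarrow> real) \<Rightarrow> bool" where
  "net_connected c \<longleftrightarrow> (\<forall>x y. (x, y) \<in> {(p, q). 0 < c p q}\<^sup>*)"

text \<open>Finite energy functions (elements of H_E are these modulo constants).\<close>

definition finite_energy :: "('a \<Rightarrow> 'a \<Rightarrow> real) \<Rightarrow> ('a \<Rightarrow> complex) \<Rightarrow> bool" where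
  "finite_energy c u \<longleftrightarrow>
     (\<lambda>(x, y). c x y * (cmod (u x - u y))\<^sup>2) summable_on (UNIV :: ('a \<times> 'a) set)"

definition energy :: "('a \<Rightarrow> 'a \<Rightarrow> real) \<Rightarrow> ('a \<Rightarrow> complex) \<Rightarrow> ('a \<Rightarrow> complex) \<Rightarrow> complex" where
  "energy c u v = (1/2) * (\<Sum>\<^sub>\<infinity>(x, y)\<in>(UNIV :: ('a \<times> 'a) set).
       complex_of_real (c x y) * (cnj (u x - u y) * (v x - v y)))"

text \<open>The reproducing kernel v_x (normalised representative with value 0 at o0).\<close>

definition reprod :: "('a \<Rightarrow> 'a \<Rightarrow> real) \<Rightarrow> 'a \<Rightarrow> 'a \<Rightarrow> ('a \<Rightarrow> complex)" where
  "reprod c o0 x = (THE v. finite_energy c v \<and> v o0 = 0 \<and>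
      (\<forall>u. finite_energy c u \<longrightarrow> energy c v u = u x - u o0))"

definition laplacian :: "('a \<Rightarrow> 'a \<Rightarrow> real) \<Rightarrow> ('a \<Rightarrow> complex) \<Rightarrow> ('a \<Rightarrow> complex)" where
  "laplacian b v = (\<lambda>x. \<Sum>y\<in>{y. 0 < b x y}. complex_of_real (b x y) * (v x - v y))"

definition delta :: "'a \<Rightarrow> ('a \<Rightarrow> complex)" where
  "delta x = (\<lambda>y. if y = x then 1 else 0)"

text \<open>Adjoint I* : H_{E_b} \<rightarrow> H_{E_c} of the inclusion I : H_{E_c} \<rightarrow> H_{E_b}
  (normalised representative with value 0 at o0).\<close>

definition incl_adj :: "('a \<Rightarrow> 'a \<Rightarrow> real) \<Rightarrow> ('a \<Rightarrow> 'a \<Rightarrow> real) \<Rightarrow> 'a \<Rightarrow> ('a \<Rightarrow> complex) \<Rightarrow> ('a \<Rightarrow> complex)" where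
  "incl_adj c b o0 f = (THE g. finite_energy c g \<and> g o0 = 0 \<and>
      (\<forall>u. finite_energy c u \<longrightarrow> energy c g u = energy b f u))"

definition lap_dom :: "('a \<Rightarrow> 'a \<Rightarrow> real) \<Rightarrow> ('a \<Rightarrow> 'a \<Rightarrow> real) \<Rightarrow> ('a \<Rightarrow> complex) set" where
  "lap_dom c b = {u. finite_energy c u \<and> finite_energy c (laplacian b u)}"

text \<open>Graph of the adjoint \<Delta>_b^{(c)} w.r.t. the inner product of H_{E_c}:
  (w, z) in the graph iff w, z in H_{E_c} and <z,u>_c = <w, \<Delta>_b u>_c for all u in dom \<Delta>_b.\<close>

definition lap_adj_graph :: "('a \<Rightarrow> 'a \<Rightarrow> real) \<Rightarrow> ('a \<Rightarrow> 'a \<Rightarrow> real) \<Rightarrow> (('a \<Rightarrow> complex) \<times> ('a \<Rightarrow> complex)) set" where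
  "lap_adj_graph c b = {(w, z). finite_energy c w \<and> finite_energy c z \<and>
      (\<forall>u\<in>lap_dom c b. energy c z u = energy c w (laplacian b u))}"

definition lap_adj_dom :: "('a \<Rightarrow> 'a \<Rightarrow> real) \<Rightarrow> ('a \<Rightarrow> 'a \<Rightarrow> real) \<Rightarrow> ('a \<Rightarrow> complex) set" where
  "lap_adj_dom c b = Domain (lap_adj_graph c b)"

definition lin_span :: "('a \<Rightarrow> complex) set \<Rightarrow> ('a \<Rightarrow> complex) set" where
  "lin_span S = {(\<lambda>y. \<Sum>f\<in>F. a f * f y) | F a. finite F \<and> F \<subseteq> S}"

end

theory Submission
  imports Defs
begin

text \<open>
  Both \<open>v\<^sub>x\<close> and \<open>\<I>\<^sup>*(\<delta>\<^sub>x - \<delta>\<^sub>o)\<close> are Riesz representers in \<open>\<H>\<^sub>\<E>\<^sub>c\<close>, of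
  \<open>u \<mapsto> u(x) - u(o)\<close> and of \<open>u \<mapsto> \<E>\<^sub>b(\<delta>\<^sub>x - \<delta>\<^sub>o, u)\<close> respectively; the latter is bounded by
  Cauchy--Schwarz since \<open>\<E>\<^sub>b \<le> \<E>\<^sub>c\<close>.  The Riesz representation theorem is proved by the
  Dirichlet principle: a minimizing sequence of \<open>\<E>(u, u) - 2 Re \<phi>(u)\<close> is Cauchy by the
  parallelogram law, converges by completeness (point evaluations are bounded on a connected
  network), and its limit satisfies the Euler--Lagrange equation \<open>\<E>(g, u) = \<phi>(u)\<close>.
  Since \<open>\<E>\<^sub>b(\<delta>\<^sub>x, u) = (\<Delta>\<^sub>b u)(x)\<close> on a locally finite network, for \<open>u\<close> in the domain of
  \<open>\<Delta>\<^sub>b\<close> this gives \<open>\<langle>\<I>\<^sup>*(\<delta>\<^sub>x - \<delta>\<^sub>o), u\<rangle>\<^sub>c = (\<Delta>\<^sub>b u)(x) - (\<Delta>\<^sub>b u)(o) = \<langle>v\<^sub>x, \<Delta>\<^sub>b u\<rangle>\<^sub>c\<close>,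
  and the graph of the adjoint is a linear subspace.
\<close>

lemma discriminant_le_if_quadratic_nonneg:
  fixes A R B :: real
  assumes "0 \<le> B" and quadratic_nonneg: "\<And>t. 0 \<le> A + 2 * t * R + t\<^sup>2 * B"
  shows "R\<^sup>2 \<le> A * B"
proof (cases "B = 0")
  case True
  have "R = 0"
  proof (rule ccontr)
    assume "R \<noteq> 0"
    then show False using quadratic_nonneg[of "- (A + 1) / (2 * R)"] True by (simp add: field_simps)
  qed
  then show ?thesis using True by simp
next
  case False
  then have "0 < B" using \<open>0 \<le> B\<close> by simp
  have "0 \<le> A + 2 * (- R / B) * R + (- R / B)\<^sup>2 * B" by (rule quadratic_nonneg)
  also have "\<dots> = (A * B - R\<^sup>2) / B" using \<open>0 < B\<close> by (simp add: field_simps power2_eq_square)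
  finally show ?thesis using \<open>0 < B\<close> by (simp add: zero_le_divide_iff)
qed

lemma cnj_mult_self: "cnj z * z = complex_of_real ((cmod z)\<^sup>2)"
  by (metis complex_norm_square mult.commute)

lemma cnj_sgn_mult_self: "cnj (sgn z) * z = complex_of_real (cmod z)"
proof (cases "z = 0")
  case False
  have "cnj z * z = complex_of_real (cmod z) * complex_of_real (cmod z)"
    by (simp add: cnj_mult_self power2_eq_square)
  then show ?thesis using False by (simp add: sgn_div_norm scaleR_conv_of_real field_simps)
qed simp

definition energy_summand ::
    "('a \<Rightarrow> 'a \<Rightarrow> real) \<Rightarrow> ('a \<Rightarrow> complex) \<Rightarrow> ('a \<Rightarrow> complex) \<Rightarrow> 'a \<times> 'a \<Rightarrow> complex" where
  "energy_summand c u v = (\<lambda>(x, y). complex_of_real (c x y) * (cnj (u x - u y) * (v x - v y)))"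

definition energy_density :: "('a \<Rightarrow> 'a \<Rightarrow> real) \<Rightarrow> ('a \<Rightarrow> complex) \<Rightarrow> 'a \<times> 'a \<Rightarrow> real" where
  "energy_density c u = (\<lambda>(x, y). c x y * (cmod (u x - u y))\<^sup>2)"

text \<open>Summed over ordered pairs, so that \<open>total_energy c u = 2 * \<E>\<^sub>c(u, u)\<close>.\<close>

definition total_energy :: "('a \<Rightarrow> 'a \<Rightarrow> real) \<Rightarrow> ('a \<Rightarrow> complex) \<Rightarrow> real" where
  "total_energy c u = (\<Sum>\<^sub>\<infinity>p. energy_density c u p)"

lemma energy_eq_infsum_summand: "energy c u v = 1/2 * (\<Sum>\<^sub>\<infinity>p. energy_summand c u v p)"
  unfolding energy_def energy_summand_def by simp

lemma finite_energy_iff_summable: "finite_energy c u \<longleftrightarrow> energy_density c u summable_on UNIV"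
  unfolding finite_energy_def energy_density_def by simp

lemma cnj_energy: "cnj (energy c u v) = energy c v u"
proof -
  have "energy_summand c v u = (\<lambda>p. cnj (energy_summand c u v p))"
    by (auto simp: energy_summand_def fun_eq_iff algebra_simps)
  then show ?thesis unfolding energy_eq_infsum_summand by simp
qed

lemma energy_const_left [simp]: "energy c (\<lambda>x. k) v = 0"
  unfolding energy_def by (simp add: case_prod_unfold)

lemma finite_energy_diff_const_iff [simp]: "finite_energy c (\<lambda>x. u x - k) \<longleftrightarrow> finite_energy c u"
  and total_energy_diff_const [simp]: "total_energy c (\<lambda>x. u x - k) = total_energy c u"
  and energy_diff_const_right [simp]: "energy c v (\<lambda>x. u x - k) = energy c v u"
  unfolding finite_energy_def total_energy_def energy_density_def energy_def by simp_all

lemma total_energy_const [simp]: "total_energy c (\<lambda>x. k) = 0"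
  and finite_energy_const [simp]: "finite_energy c (\<lambda>x. k)"
  unfolding total_energy_def finite_energy_def energy_density_def by (simp_all add: case_prod_unfold)

lemma energy_density_scale: "energy_density c (\<lambda>x. a * u x) = (\<lambda>p. (cmod a)\<^sup>2 * energy_density c u p)"
  by (auto simp: energy_density_def fun_eq_iff right_diff_distrib[symmetric] norm_mult power_mult_distrib)

lemma finite_energy_scale: "finite_energy c u \<Longrightarrow> finite_energy c (\<lambda>x. a * u x)"
  unfolding finite_energy_iff_summable energy_density_scale by (rule summable_on_cmult_right)

lemma total_energy_scale: "finite_energy c u \<Longrightarrow> total_energy c (\<lambda>x. a * u x) = (cmod a)\<^sup>2 * total_energy c u"
  unfolding total_energy_def energy_density_scale finite_energy_iff_summable by (rule infsum_cmult_right)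

locale energy_space =
  fixes c :: "'a \<Rightarrow> 'a \<Rightarrow> real"
  assumes nonneg: "0 \<le> c x y"
begin

lemma energy_density_nonneg: "0 \<le> energy_density c u p"
  using nonneg by (cases p) (simp add: energy_density_def)

lemma total_energy_nonneg: "0 \<le> total_energy c u"
  unfolding total_energy_def by (rule infsum_nonneg) (rule energy_density_nonneg)

lemma norm_energy_summand_le:
  "norm (energy_summand c u v p) \<le> energy_density c u p + energy_density c v p"
proof (cases p)
  case (Pair x y)
  let ?a = "cmod (u x - u y)" and ?b = "cmod (v x - v y)"
  have "?a * ?b \<le> ?a\<^sup>2 + ?b\<^sup>2"
    using zero_le_power2[of "?a - ?b"]
      mult_nonneg_nonneg[OF norm_ge_zero norm_ge_zero, of "u x - u y" "v x - v y"]
    unfolding power2_diff by linarith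
  have "norm (energy_summand c u v p) = c x y * (?a * ?b)"
    using nonneg by (simp add: energy_summand_def Pair norm_mult del: complex_cnj_diff)
  also have "\<dots> \<le> c x y * (?a\<^sup>2 + ?b\<^sup>2)"
    using \<open>?a * ?b \<le> ?a\<^sup>2 + ?b\<^sup>2\<close> nonneg by (rule mult_left_mono)
  also have "\<dots> = energy_density c u p + energy_density c v p"
    by (simp add: energy_density_def Pair algebra_simps)
  finally show ?thesis .
qed

lemma summable_energy_summand:
  assumes "finite_energy c u" "finite_energy c v"
  shows "energy_summand c u v summable_on UNIV"
proof -
  have "(\<lambda>p. norm (energy_summand c u v p)) summable_on UNIV"
    by (rule summable_on_comparison_test[OF summable_on_add norm_energy_summand_le])
      (use assms in \<open>simp_all add: finite_energy_iff_summable\<close>)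
  then show ?thesis using summable_on_iff_abs_summable_on_complex by blast
qed

lemma finite_energy_add:
  assumes "finite_energy c u" "finite_energy c v"
  shows "finite_energy c (\<lambda>x. u x + v x)"
  unfolding finite_energy_iff_summable
proof (rule summable_on_comparison_test)
  show "(\<lambda>p. 2 * energy_density c u p + 2 * energy_density c v p) summable_on UNIV"
    using assms by (auto simp: finite_energy_iff_summable intro!: summable_on_add summable_on_cmult_right)
  fix p :: "'a \<times> 'a"
  show "0 \<le> energy_density c (\<lambda>x. u x + v x) p" by (rule energy_density_nonneg)
  obtain x y where p: "p = (x, y)" by fastforce
  have "cmod (u x + v x - (u y + v y)) \<le> cmod (u x - u y) + cmod (v x - v y)"
    by (metis add_diff_add norm_triangle_ineq)
  then have "(cmod (u x + v x - (u y + v y)))\<^sup>2 \<le> (cmod (u x - u y) + cmod (v x - v y))\<^sup>2"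
    by (simp add: power_mono)
  also have "\<dots> \<le> 2 * (cmod (u x - u y))\<^sup>2 + 2 * (cmod (v x - v y))\<^sup>2"
    using zero_le_power2[of "cmod (u x - u y) - cmod (v x - v y)"] by (simp only: power2_sum power2_diff)
  finally have "(cmod (u x + v x - (u y + v y)))\<^sup>2 \<le> \<dots>" .
  then have "c x y * (cmod (u x + v x - (u y + v y)))\<^sup>2
      \<le> c x y * (2 * (cmod (u x - u y))\<^sup>2 + 2 * (cmod (v x - v y))\<^sup>2)"
    using nonneg by (rule mult_left_mono)
  then show "energy_density c (\<lambda>x. u x + v x) p \<le> 2 * energy_density c u p + 2 * energy_density c v p"
    using nonneg[of x y] by (simp add: energy_density_def p algebra_simps)
qed

lemma finite_energy_diff:
  assumes "finite_energy c u" "finite_energy c v"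
  shows "finite_energy c (\<lambda>x. u x - v x)"
  using finite_energy_add[OF assms(1) finite_energy_scale[OF assms(2), of "-1"]] by simp

lemma energy_add_right:
  assumes "finite_energy c u" "finite_energy c v" "finite_energy c w"
  shows "energy c u (\<lambda>x. v x + w x) = energy c u v + energy c u w"
proof -
  have "energy_summand c u (\<lambda>x. v x + w x) = (\<lambda>p. energy_summand c u v p + energy_summand c u w p)"
    by (auto simp: energy_summand_def fun_eq_iff algebra_simps)
  then show ?thesis
    unfolding energy_eq_infsum_summand
    using infsum_add[OF summable_energy_summand summable_energy_summand] assms
    by (simp add: algebra_simps)
qed

lemma energy_scale_right:
  assumes "finite_energy c u" "finite_energy c v"
  shows "energy c u (\<lambda>x. a * v x) = a * energy c u v"
proof -
  have "energy_summand c u (\<lambda>x. a * v x) = (\<lambda>p. a * energy_summand c u v p)"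
    by (auto simp: energy_summand_def fun_eq_iff algebra_simps)
  then show ?thesis
    unfolding energy_eq_infsum_summand
    using infsum_cmult_right[OF summable_energy_summand[OF assms]] by simp
qed

lemma energy_add_left:
  assumes "finite_energy c v" "finite_energy c w" "finite_energy c u"
  shows "energy c (\<lambda>x. v x + w x) u = energy c v u + energy c w u"
  using energy_add_right[OF assms(3,1,2)] by (metis cnj_energy complex_cnj_add)

lemma energy_scale_left:
  assumes "finite_energy c v" "finite_energy c u"
  shows "energy c (\<lambda>x. a * v x) u = cnj a * energy c v u"
  using energy_scale_right[OF assms(2,1)] by (metis cnj_energy complex_cnj_mult)

lemma energy_diff_left:
  assumes "finite_energy c v" "finite_energy c w" "finite_energy c u"
  shows "energy c (\<lambda>x. v x - w x) u = energy c v u - energy c w u"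
  using energy_add_left[OF assms(1) finite_energy_scale[OF assms(2)] assms(3), of "-1"]
    energy_scale_left[OF assms(2,3), of "-1"] by simp

lemma energy_self:
  assumes "finite_energy c u"
  shows "energy c u u = complex_of_real (total_energy c u / 2)"
proof -
  have "energy_summand c u u = (\<lambda>p. complex_of_real (energy_density c u p))"
    by (auto simp: energy_summand_def energy_density_def fun_eq_iff cnj_mult_self simp del: complex_cnj_diff)
  moreover have "((\<lambda>p. complex_of_real (energy_density c u p)) has_sum total_energy c u) UNIV"
    unfolding total_energy_def
    using assms by (intro has_sum_of_real) (simp add: finite_energy_iff_summable)
  ultimately show ?thesis unfolding energy_eq_infsum_summand by (simp add: infsumI)
qed

lemma total_energy_add_scaled:
  assumes u: "finite_energy c u" and v: "finite_energy c v"
  shows "total_energy c (\<lambda>x. u x + a * v x)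
    = total_energy c u + 4 * Re (a * energy c u v) + (cmod a)\<^sup>2 * total_energy c v"
proof -
  have av: "finite_energy c (\<lambda>x. a * v x)" by (rule finite_energy_scale[OF v])
  have w: "finite_energy c (\<lambda>x. u x + a * v x)" by (rule finite_energy_add[OF u av])
  have "complex_of_real (total_energy c (\<lambda>x. u x + a * v x) / 2)
      = energy c (\<lambda>x. u x + a * v x) (\<lambda>x. u x + a * v x)"
    by (rule energy_self[OF w, symmetric])
  also have "\<dots> = energy c u (\<lambda>x. u x + a * v x) + cnj a * energy c v (\<lambda>x. u x + a * v x)"
    by (simp add: energy_add_left[OF u av w] energy_scale_left[OF v w])
  also have "\<dots> = energy c u u + a * energy c u v + cnj a * energy c v u + cnj a * a * energy c v v"
    by (simp add: energy_add_right[OF _ u av] energy_scale_right u v algebra_simps)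
  also have "\<dots> = complex_of_real (total_energy c u / 2) + a * energy c u v + cnj (a * energy c u v)
      + complex_of_real ((cmod a)\<^sup>2 * total_energy c v / 2)"
    by (simp add: energy_self u v cnj_energy cnj_mult_self)
  finally show ?thesis
    by (simp only: complex_eq_iff) simp
qed

lemma energy_Cauchy_Schwarz:
  assumes u: "finite_energy c u" and v: "finite_energy c v"
  shows "(cmod (energy c u v))\<^sup>2 \<le> total_energy c u / 2 * (total_energy c v / 2)"
proof -
  have real_part: "(Re (energy c u w))\<^sup>2 \<le> total_energy c u / 2 * (total_energy c w / 2)"
    if w: "finite_energy c w" for w
  proof -
    have "(2 * Re (energy c u w))\<^sup>2 \<le> total_energy c u * total_energy c w"
    proof (rule discriminant_le_if_quadratic_nonneg[OF total_energy_nonneg])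
      fix t :: real
      show "0 \<le> total_energy c u + 2 * t * (2 * Re (energy c u w)) + t\<^sup>2 * total_energy c w"
        using total_energy_add_scaled[OF u w, of "complex_of_real t"]
          total_energy_nonneg[of "\<lambda>x. u x + complex_of_real t * w x"] by simp
    qed
    then show ?thesis by (simp add: power_mult_distrib)
  qed
  define a where "a = cnj (sgn (energy c u v))"
  have "cmod (energy c u v) = Re (energy c u (\<lambda>x. a * v x))"
    by (simp add: energy_scale_right[OF u v] a_def cnj_sgn_mult_self)
  then have "(cmod (energy c u v))\<^sup>2 \<le> total_energy c u / 2 * ((cmod a)\<^sup>2 * total_energy c v / 2)"
    using real_part[OF finite_energy_scale[OF v]] by (simp add: total_energy_scale[OF v])
  also have "\<dots> \<le> total_energy c u / 2 * (total_energy c v / 2)"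
    by (intro mult_left_mono divide_right_mono mult_left_le_one_le)
      (simp_all add: total_energy_nonneg a_def norm_sgn power_le_one)
  finally show ?thesis .
qed

lemma total_energy_parallelogram:
  assumes u: "finite_energy c u" and v: "finite_energy c v"
  shows "total_energy c (\<lambda>x. u x - v x) + total_energy c (\<lambda>x. u x + v x)
    = 2 * total_energy c u + 2 * total_energy c v"
  using total_energy_add_scaled[OF u v, of 1] total_energy_add_scaled[OF u v, of "-1"] by simp

lemma sum_energy_density_le:
  assumes "finite_energy c u" "finite F"
  shows "sum (energy_density c u) F \<le> total_energy c u"
  unfolding total_energy_def
  using assms by (intro finite_sum_le_infsum) (simp_all add: finite_energy_iff_summable energy_density_nonneg)

lemma finite_energy_if_finite_sums_le:
  assumes "\<And>F. finite F \<Longrightarrow> sum (energy_density c u) F \<le> \<epsilon>"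
  shows "finite_energy c u" and "total_energy c u \<le> \<epsilon>"
proof -
  show fe: "finite_energy c u"
    unfolding finite_energy_iff_summable
    using assms energy_density_nonneg by (intro nonneg_bdd_above_summable_on bdd_aboveI) auto
  show "total_energy c u \<le> \<epsilon>"
    unfolding total_energy_def
    using fe assms by (intro infsum_le_finite_sums) (simp_all add: finite_energy_iff_summable)
qed

lemma total_energy_le_if_pointwise_limit:
  assumes lim: "\<And>x. (\<lambda>m. f m x) \<longlonglongrightarrow> g x"
    and bound: "\<forall>\<^sub>F m in sequentially. finite_energy c (f m) \<and> total_energy c (f m) \<le> \<epsilon>"
  shows "finite_energy c g" and "total_energy c g \<le> \<epsilon>"
proof -
  have "sum (energy_density c g) F \<le> \<epsilon>" if F: "finite F" for F
  proof (rule tendsto_upperbound)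
    show "(\<lambda>m. sum (energy_density c (f m)) F) \<longlonglongrightarrow> sum (energy_density c g) F"
      unfolding energy_density_def case_prod_unfold by (intro tendsto_intros lim)
    show "\<forall>\<^sub>F m in sequentially. sum (energy_density c (f m)) F \<le> \<epsilon>"
      using bound by eventually_elim (use F sum_energy_density_le in force)
  qed simp
  then show "finite_energy c g" and "total_energy c g \<le> \<epsilon>"
    using finite_energy_if_finite_sums_le by blast+
qed

lemma energy_tendsto_zero:
  assumes u: "finite_energy c u" and d: "\<And>n. finite_energy c (d n)"
    and lim: "(\<lambda>n. total_energy c (d n)) \<longlonglongrightarrow> 0"
  shows "(\<lambda>n. energy c u (d n)) \<longlonglongrightarrow> 0"
proof (rule Lim_null_comparison)
  show "\<forall>\<^sub>F n in sequentially. norm (energy c u (d n)) \<le> sqrt (total_energy c u / 2 * (total_energy c (d n) / 2))"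
    using energy_Cauchy_Schwarz[OF u d] by (simp add: real_le_rsqrt)
  show "(\<lambda>n. sqrt (total_energy c u / 2 * (total_energy c (d n) / 2))) \<longlonglongrightarrow> 0"
    using tendsto_real_sqrt[OF tendsto_mult[OF tendsto_const tendsto_divide[OF lim tendsto_const]]]
    by simp
qed

lemma total_energy_tendsto:
  assumes f: "\<And>n. finite_energy c (f n)" and g: "finite_energy c g"
    and lim: "(\<lambda>n. total_energy c (\<lambda>x. f n x - g x)) \<longlonglongrightarrow> 0"
  shows "(\<lambda>n. total_energy c (f n)) \<longlonglongrightarrow> total_energy c g"
proof -
  have d: "finite_energy c (\<lambda>x. f n x - g x)" for n by (rule finite_energy_diff[OF f g])
  have "total_energy c (f n) = total_energy c g + 4 * Re (energy c g (\<lambda>x. f n x - g x))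
      + total_energy c (\<lambda>x. f n x - g x)" for n
    using total_energy_add_scaled[OF g d, of 1] by simp
  moreover have "(\<lambda>n. total_energy c g + 4 * Re (energy c g (\<lambda>x. f n x - g x))
      + total_energy c (\<lambda>x. f n x - g x)) \<longlonglongrightarrow> total_energy c g + 4 * Re 0 + 0"
    by (intro tendsto_intros energy_tendsto_zero[OF g d lim] lim)
  ultimately show ?thesis by simp
qed

end

definition represents ::
    "('a \<Rightarrow> 'a \<Rightarrow> real) \<Rightarrow> 'a \<Rightarrow> (('a \<Rightarrow> complex) \<Rightarrow> complex) \<Rightarrow> ('a \<Rightarrow> complex) \<Rightarrow> bool" where
  "represents c o0 \<phi> g \<longleftrightarrow> finite_energy c g \<and> g o0 = 0 \<and> (\<forall>u. finite_energy c u \<longrightarrow> energy c g u = \<phi> u)"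

locale connected_network = energy_space +
  assumes connected: "net_connected c"
begin

lemma difference_bound: "\<exists>K\<ge>0. \<forall>u. finite_energy c u \<longrightarrow> cmod (u y - u x) \<le> K * sqrt (total_energy c u)"
proof -
  have "(x, y) \<in> {(p, q). 0 < c p q}\<^sup>*" using connected by (simp add: net_connected_def)
  then show ?thesis
  proof (induction rule: rtrancl_induct)
    case base
    show ?case by (intro exI[of _ 0]) simp
  next
    case (step y z)
    then obtain K where K: "K \<ge> 0" "\<And>u. finite_energy c u \<Longrightarrow> cmod (u y - u x) \<le> K * sqrt (total_energy c u)"
      by blast
    have cyz: "0 < c y z" using step by simp
    show ?case
    proof (intro exI[of _ "K + 1 / sqrt (c y z)"] conjI allI impI)
      show "0 \<le> K + 1 / sqrt (c y z)" using K cyz by simp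
      fix u assume u: "finite_energy c u"
      have "c y z * (cmod (u y - u z))\<^sup>2 \<le> total_energy c u"
        using sum_energy_density_le[OF u, of "{(y, z)}"] by (simp add: energy_density_def)
      then have "cmod (u z - u y) \<le> sqrt (total_energy c u) / sqrt (c y z)"
        using cyz by (simp add: real_le_rsqrt real_sqrt_divide field_simps norm_minus_commute)
      moreover have "cmod (u z - u x) \<le> cmod (u z - u y) + cmod (u y - u x)"
        using norm_triangle_ineq[of "u z - u y" "u y - u x"] by simp
      ultimately show "cmod (u z - u x) \<le> (K + 1 / sqrt (c y z)) * sqrt (total_energy c u)"
        using K(2)[OF u] by (simp add: field_simps)
    qed
  qed
qed

lemma eq_if_same_energy:
  assumes g1: "finite_energy c g1" and g2: "finite_energy c g2" and "g1 o0 = g2 o0"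
    and same: "\<And>u. finite_energy c u \<Longrightarrow> energy c g1 u = energy c g2 u"
  shows "g1 = g2"
proof
  fix x
  define d where "d = (\<lambda>x. g1 x - g2 x)"
  have d: "finite_energy c d" unfolding d_def by (rule finite_energy_diff[OF g1 g2])
  have "complex_of_real (total_energy c d / 2) = energy c g1 d - energy c g2 d"
    unfolding energy_self[OF d, symmetric] by (simp add: d_def energy_diff_left[OF g1 g2 d[unfolded d_def]])
  then have "total_energy c d = 0" using same[OF d] by simp
  moreover obtain K where "cmod (d x - d o0) \<le> K * sqrt (total_energy c d)"
    using difference_bound d by blast
  ultimately show "g1 x = g2 x" using \<open>g1 o0 = g2 o0\<close> by (simp add: d_def)
qed

lemma Cauchy_pointwise:
  assumes fe: "\<And>n. finite_energy c (f n)" and normalized: "\<And>n. f n o0 = 0"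
    and Cauchy: "\<And>\<epsilon>. 0 < \<epsilon> \<Longrightarrow> \<exists>N. \<forall>n\<ge>N. \<forall>m\<ge>N. total_energy c (\<lambda>x. f n x - f m x) \<le> \<epsilon>"
  shows "Cauchy (\<lambda>n. f n x)"
proof (rule metric_CauchyI)
  obtain K where K: "K \<ge> 0" "\<And>u. finite_energy c u \<Longrightarrow> cmod (u x - u o0) \<le> K * sqrt (total_energy c u)"
    using difference_bound by blast
  fix e :: real assume "0 < e"
  then obtain N where N: "\<And>n m. n \<ge> N \<Longrightarrow> m \<ge> N \<Longrightarrow> total_energy c (\<lambda>x. f n x - f m x) \<le> (e / (K + 1))\<^sup>2"
    using Cauchy[of "(e / (K + 1))\<^sup>2"] K by fastforce
  show "\<exists>M. \<forall>m\<ge>M. \<forall>n\<ge>M. dist (f m x) (f n x) < e"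
  proof (intro exI allI impI)
    fix m n assume "N \<le> m" "N \<le> n"
    have "dist (f m x) (f n x) \<le> K * sqrt (total_energy c (\<lambda>x. f m x - f n x))"
      using K(2)[OF finite_energy_diff[OF fe fe]] normalized by (simp add: dist_norm)
    also have "\<dots> \<le> K * (e / (K + 1))"
      using N[OF \<open>N \<le> m\<close> \<open>N \<le> n\<close>] K \<open>0 < e\<close>
      by (intro mult_left_mono real_le_lsqrt) simp_all
    also have "\<dots> < e" using K \<open>0 < e\<close> by (simp add: divide_simps)
    finally show "dist (f m x) (f n x) < e" .
  qed
qed

lemma energy_complete:
  assumes fe: "\<And>n. finite_energy c (f n)" and normalized: "\<And>n. f n o0 = 0"
    and Cauchy: "\<And>\<epsilon>. 0 < \<epsilon> \<Longrightarrow> \<exists>N. \<forall>n\<ge>N. \<forall>m\<ge>N. total_energy c (\<lambda>x. f n x - f m x) \<le> \<epsilon>"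
  obtains g where "finite_energy c g" "g o0 = 0" "(\<lambda>n. total_energy c (\<lambda>x. f n x - g x)) \<longlonglongrightarrow> 0"
proof -
  define g where "g x = lim (\<lambda>n. f n x)" for x
  have lim: "(\<lambda>n. f n x) \<longlonglongrightarrow> g x" for x
    using Cauchy_pointwise[OF assms] by (simp add: g_def Cauchy_convergent_iff convergent_LIMSEQ_iff)
  have close: "finite_energy c (\<lambda>x. f n x - g x) \<and> total_energy c (\<lambda>x. f n x - g x) \<le> \<epsilon>"
    if N: "\<forall>n\<ge>N. \<forall>m\<ge>N. total_energy c (\<lambda>x. f n x - f m x) \<le> \<epsilon>" and "N \<le> n" for n N \<epsilon>
  proof -
    have bound: "\<forall>\<^sub>F m in sequentially.
        finite_energy c (\<lambda>x. f n x - f m x) \<and> total_energy c (\<lambda>x. f n x - f m x) \<le> \<epsilon>"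
      using N \<open>N \<le> n\<close> by (auto simp: eventually_sequentially intro!: finite_energy_diff fe)
    have "(\<lambda>m. f n x - f m x) \<longlonglongrightarrow> f n x - g x" for x
      by (intro tendsto_diff tendsto_const lim)
    from total_energy_le_if_pointwise_limit[OF this bound] show ?thesis ..
  qed
  obtain N where "\<forall>n\<ge>N. \<forall>m\<ge>N. total_energy c (\<lambda>x. f n x - f m x) \<le> 1"
    using Cauchy[of 1] by auto
  then have "finite_energy c (\<lambda>x. f N x - g x)" using close by blast
  then have "finite_energy c (\<lambda>x. f N x - (f N x - g x))" by (rule finite_energy_diff[OF fe])
  moreover have "g o0 = 0"
    using lim[of o0] normalized by (simp add: LIMSEQ_const_iff)
  moreover have "(\<lambda>n. total_energy c (\<lambda>x. f n x - g x)) \<longlonglongrightarrow> 0"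
  proof (rule LIMSEQ_I)
    fix r :: real assume "0 < r"
    then obtain N where N: "\<forall>n\<ge>N. \<forall>m\<ge>N. total_energy c (\<lambda>x. f n x - f m x) \<le> r / 2"
      using Cauchy[of "r / 2"] by auto
    show "\<exists>N. \<forall>n\<ge>N. norm (total_energy c (\<lambda>x. f n x - g x) - 0) < r"
    proof (intro exI allI impI)
      fix n assume "N \<le> n"
      then have "total_energy c (\<lambda>x. f n x - g x) \<le> r / 2" using close[OF N] by simp
      then show "norm (total_energy c (\<lambda>x. f n x - g x) - 0) < r"
        using total_energy_nonneg[of "\<lambda>x. f n x - g x"] \<open>0 < r\<close> by simp
    qed
  qed
  ultimately show ?thesis using that by simp
qed

lemma represents_unique: "represents c o0 \<phi> g1 \<Longrightarrow> represents c o0 \<phi> g2 \<Longrightarrow> g1 = g2"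
  unfolding represents_def by (intro eq_if_same_energy[of g1 g2 o0]) auto

end

locale bounded_energy_functional = connected_network +
  fixes \<phi> :: "('a \<Rightarrow> complex) \<Rightarrow> complex"
  assumes additive: "finite_energy c u \<Longrightarrow> finite_energy c v \<Longrightarrow> \<phi> (\<lambda>x. u x + v x) = \<phi> u + \<phi> v"
    and homogeneous: "finite_energy c u \<Longrightarrow> \<phi> (\<lambda>x. a * u x) = a * \<phi> u"
    and bounded: "\<exists>K. \<forall>u. finite_energy c u \<longrightarrow> cmod (\<phi> u) \<le> K * sqrt (total_energy c u)"
begin

lemma phi_diff: "finite_energy c u \<Longrightarrow> finite_energy c v \<Longrightarrow> \<phi> (\<lambda>x. u x - v x) = \<phi> u - \<phi> v"
  using additive[OF _ finite_energy_scale, of u v "-1"] homogeneous[of v "-1"] by simp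

lemma phi_const [simp]: "\<phi> (\<lambda>x. k) = 0"
  using bounded by (metis finite_energy_const mult_zero_right norm_le_zero_iff real_sqrt_zero total_energy_const)

lemma phi_tendsto:
  assumes f: "\<And>n. finite_energy c (f n)" and g: "finite_energy c g"
    and lim: "(\<lambda>n. total_energy c (\<lambda>x. f n x - g x)) \<longlonglongrightarrow> 0"
  shows "(\<lambda>n. \<phi> (f n)) \<longlonglongrightarrow> \<phi> g"
proof -
  obtain K where K: "\<And>u. finite_energy c u \<Longrightarrow> cmod (\<phi> u) \<le> K * sqrt (total_energy c u)"
    using bounded by blast
  have "(\<lambda>n. \<phi> (f n) - \<phi> g) \<longlonglongrightarrow> 0"
  proof (rule Lim_null_comparison)
    show "\<forall>\<^sub>F n in sequentially. norm (\<phi> (f n) - \<phi> g) \<le> K * sqrt (total_energy c (\<lambda>x. f n x - g x))"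
      using K[OF finite_energy_diff[OF f g]] by (simp add: phi_diff[OF f g])
    show "(\<lambda>n. K * sqrt (total_energy c (\<lambda>x. f n x - g x))) \<longlonglongrightarrow> 0"
      using tendsto_real_sqrt[OF lim] by (intro tendsto_mult_right_zero) simp
  qed
  then show ?thesis by (simp add: LIM_zero_iff)
qed

definition energy_functional :: "('a \<Rightarrow> complex) \<Rightarrow> real" where
  "energy_functional u = total_energy c u / 2 - 2 * Re (\<phi> u)"

lemma energy_functional_bdd_below: "bdd_below (energy_functional ` {u. finite_energy c u})"
proof -
  obtain K where K: "\<And>u. finite_energy c u \<Longrightarrow> cmod (\<phi> u) \<le> K * sqrt (total_energy c u)"
    using bounded by blast
  have "- 2 * K\<^sup>2 \<le> energy_functional u" if u: "finite_energy c u" for u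
  proof -
    define r where "r = sqrt (total_energy c u)"
    have "total_energy c u = r\<^sup>2" using total_energy_nonneg by (simp add: r_def)
    moreover have "Re (\<phi> u) \<le> K * r" using K[OF u] complex_Re_le_cmod[of "\<phi> u"] by (simp add: r_def)
    moreover have "0 \<le> (r - 2 * K)\<^sup>2" by simp
    ultimately show ?thesis by (simp add: energy_functional_def power2_eq_square algebra_simps)
  qed
  then show ?thesis by (metis bdd_belowI2 mem_Collect_eq)
qed

text \<open>The parallelogram law, rewritten for the energy functional.\<close>

lemma energy_functional_midpoint:
  assumes p: "finite_energy c p" and q: "finite_energy c q"
  shows "total_energy c (\<lambda>x. p x - q x)
    = 4 * energy_functional p + 4 * energy_functional q - 8 * energy_functional (\<lambda>x. (p x + q x) / 2)"
proof -
  have pq: "finite_energy c (\<lambda>x. p x + q x)" by (rule finite_energy_add[OF p q])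
  have mid: "(\<lambda>x. (p x + q x) / 2) = (\<lambda>x. (1 / 2) * (p x + q x))" by simp
  show ?thesis
    using total_energy_parallelogram[OF p q]
    unfolding energy_functional_def mid total_energy_scale[OF pq] homogeneous[OF pq] additive[OF p q]
    by (simp add: power2_eq_square norm_divide field_simps)
qed

lemma energy_functional_tendsto:
  assumes f: "\<And>n. finite_energy c (f n)" and g: "finite_energy c g"
    and lim: "(\<lambda>n. total_energy c (\<lambda>x. f n x - g x)) \<longlonglongrightarrow> 0"
  shows "(\<lambda>n. energy_functional (f n)) \<longlonglongrightarrow> energy_functional g"
  unfolding energy_functional_def
  by (intro tendsto_intros total_energy_tendsto[OF f g lim] phi_tendsto[OF f g lim]) simp

lemma minimizing_sequence_Cauchy:
  assumes G: "\<And>n. finite_energy c (G n)"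
    and lower: "\<And>h. finite_energy c h \<Longrightarrow> m \<le> energy_functional h"
    and lim: "(\<lambda>n. energy_functional (G n)) \<longlonglongrightarrow> m"
    and "0 < \<epsilon>"
  shows "\<exists>N. \<forall>n\<ge>N. \<forall>k\<ge>N. total_energy c (\<lambda>x. G n x - G k x) \<le> \<epsilon>"
proof -
  obtain N where N: "\<And>n. n \<ge> N \<Longrightarrow> \<bar>energy_functional (G n) - m\<bar> < \<epsilon> / 8"
    using LIMSEQ_D[OF lim, of "\<epsilon> / 8"] \<open>0 < \<epsilon>\<close> by auto
  have "total_energy c (\<lambda>x. G n x - G k x) \<le> \<epsilon>" if "N \<le> n" "N \<le> k" for n k
  proof -
    have "finite_energy c (\<lambda>x. (1 / 2) * (G n x + G k x))"
      by (intro finite_energy_scale finite_energy_add G)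
    then have "m \<le> energy_functional (\<lambda>x. (G n x + G k x) / 2)"
      by (intro lower) simp
    then show ?thesis
      using energy_functional_midpoint[OF G G, of n k] N[OF \<open>N \<le> n\<close>] N[OF \<open>N \<le> k\<close>] by linarith
  qed
  then show ?thesis by blast
qed

lemma minimizer_exists:
  obtains g where "finite_energy c g" "g o0 = 0" "\<And>h. finite_energy c h \<Longrightarrow> energy_functional g \<le> energy_functional h"
proof -
  define S where "S = energy_functional ` {u. finite_energy c u}"
  define m where "m = Inf S"
  have lower: "m \<le> energy_functional h" if "finite_energy c h" for h
    unfolding m_def S_def using that energy_functional_bdd_below by (intro cInf_lower imageI) simp_all
  have "m \<in> closure S"
    unfolding m_def S_def using energy_functional_bdd_below finite_energy_const
    by (intro closure_contains_Inf) blast+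
  then obtain y where y: "\<forall>n. y n \<in> S" and "y \<longlonglongrightarrow> m"
    unfolding closure_sequential by (elim exE conjE)
  from y have "\<forall>n. \<exists>u. finite_energy c u \<and> y n = energy_functional u" by (simp add: S_def image_iff)
  then obtain F where F: "\<And>n. finite_energy c (F n)" and "\<And>n. y n = energy_functional (F n)"
    by (metis choice)
  then have "y = (\<lambda>n. energy_functional (F n))" by (intro ext)
  with \<open>y \<longlonglongrightarrow> m\<close> have "(\<lambda>n. energy_functional (F n)) \<longlonglongrightarrow> m" by (simp only:)
  define G where "G n = (\<lambda>x. F n x - F n o0)" for n
    \<comment> \<open>normalizing does not change the energy functional, since \<open>\<phi>\<close> kills constants\<close>
  have G: "finite_energy c (G n)" for n using F by (simp add: G_def)
  have "energy_functional (G n) = energy_functional (F n)" for n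
    using phi_diff[OF F finite_energy_const] by (simp add: G_def energy_functional_def)
  with \<open>(\<lambda>n. energy_functional (F n)) \<longlonglongrightarrow> m\<close>
  have lim: "(\<lambda>n. energy_functional (G n)) \<longlonglongrightarrow> m" by (simp only:)
  have "G n o0 = 0" for n by (simp add: G_def)
  then obtain g where g: "finite_energy c g" "g o0 = 0"
    and conv: "(\<lambda>n. total_energy c (\<lambda>x. G n x - g x)) \<longlonglongrightarrow> 0"
    using energy_complete[of G o0, OF G _ minimizing_sequence_Cauchy[OF G lower lim]] by blast
  have "energy_functional g = m"
    using LIMSEQ_unique[OF energy_functional_tendsto[OF G g(1) conv] lim] .
  then show ?thesis using lower by (intro that[OF g]) simp
qed

lemma energy_of_minimizer:
  assumes g: "finite_energy c g"
    and min: "\<And>h. finite_energy c h \<Longrightarrow> energy_functional g \<le> energy_functional h"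
    and u: "finite_energy c u"
  shows "energy c g u = \<phi> u"
proof -
  have Re_zero: "Re (energy c g w - \<phi> w) = 0" if w: "finite_energy c w" for w
  proof -
    have "(Re (energy c g w - \<phi> w))\<^sup>2 \<le> 0 * (total_energy c w / 2)"
    proof (rule discriminant_le_if_quadratic_nonneg)
      show "0 \<le> total_energy c w / 2" using total_energy_nonneg by simp
      fix t :: real
      have "energy_functional g \<le> energy_functional (\<lambda>x. g x + complex_of_real t * w x)"
        by (intro min finite_energy_add finite_energy_scale g w)
      moreover have "energy_functional (\<lambda>x. g x + complex_of_real t * w x)
          = energy_functional g + 2 * t * Re (energy c g w - \<phi> w) + t\<^sup>2 * (total_energy c w / 2)"
        unfolding energy_functional_def total_energy_add_scaled[OF g w]
          additive[OF g finite_energy_scale[OF w]] homogeneous[OF w]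
        by (simp add: algebra_simps)
      ultimately show "0 \<le> 0 + 2 * t * Re (energy c g w - \<phi> w) + t\<^sup>2 * (total_energy c w / 2)"
        by simp
    qed
    then show ?thesis by simp
  qed
  have "Im (energy c g u - \<phi> u) = - Re (energy c g (\<lambda>x. \<i> * u x) - \<phi> (\<lambda>x. \<i> * u x))"
    by (simp add: energy_scale_right[OF g u] homogeneous[OF u])
  then show ?thesis
    using Re_zero[OF u] Re_zero[OF finite_energy_scale[OF u]] by (simp add: complex_eq_iff)
qed

lemma represents_The: "represents c o0 \<phi> (THE g. represents c o0 \<phi> g)"
proof -
  obtain g where "finite_energy c g" "g o0 = 0"
    and "\<And>h. finite_energy c h \<Longrightarrow> energy_functional g \<le> energy_functional h"
    using minimizer_exists[of o0] by blast
  then have "represents c o0 \<phi> g" unfolding represents_def using energy_of_minimizer by blast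
  then have "\<exists>!g. represents c o0 \<phi> g" using represents_unique by blast
  then show ?thesis by (rule theI')
qed

end

lemma energy_space_if_conductance: "conductance c \<Longrightarrow> energy_space c"
  by unfold_locales (simp add: conductance_def)

lemma finite_energy_mono:
  assumes b: "\<And>x y. 0 \<le> b x y" and le: "\<And>x y. b x y \<le> c x y" and u: "finite_energy c u"
  shows "finite_energy b u" and "total_energy b u \<le> total_energy c u"
proof -
  interpret b: energy_space b by unfold_locales (rule b)
  have pointwise: "energy_density b u p \<le> energy_density c u p" for p
    using le by (cases p) (simp add: energy_density_def mult_right_mono)
  moreover have c: "energy_density c u summable_on UNIV" using u by (simp add: finite_energy_iff_summable)
  ultimately show fe: "finite_energy b u"
    unfolding finite_energy_iff_summable by (blast intro: summable_on_comparison_test b.energy_density_nonneg)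
  show "total_energy b u \<le> total_energy c u"
    unfolding total_energy_def using fe c pointwise
    by (intro infsum_mono) (simp_all add: finite_energy_iff_summable)
qed

lemma
  assumes b: "conductance b" and finite: "locally_finite b"
  shows finite_energy_delta: "finite_energy b (delta x)"
    and energy_delta: "energy b (delta x) u = laplacian b u x"
proof -
  define N where "N = {y. 0 < b x y}"
  define S where "S = Pair x ` N \<union> (\<lambda>y. (y, x)) ` N"
  have N: "finite N" using finite by (simp add: locally_finite_def N_def)
  then have S: "finite S" by (simp add: S_def)
  have x: "x \<notin> N" using b by (simp add: N_def conductance_def)
  have vanish: "b p q = 0 \<or> delta x p = delta x q" if "(p, q) \<notin> S" for p q
    using that b by (auto simp: S_def N_def delta_def conductance_def image_iff le_less)
  have "energy_density b (delta x) p = 0" if "p \<notin> S" for p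
    using vanish that by (cases p) (auto simp: energy_density_def)
  then show "finite_energy b (delta x)"
    unfolding finite_energy_iff_summable
    by (intro finite_nonzero_values_imp_summable_on finite_subset[OF _ S]) auto
  have "energy_summand b (delta x) u p = 0" if "p \<notin> S" for p
    using vanish that by (cases p) (auto simp: energy_summand_def)
  then have "(\<Sum>\<^sub>\<infinity>p. energy_summand b (delta x) u p) = sum (energy_summand b (delta x) u) S"
    using S by (subst infsum_cong_neutral[where T = S]) auto
  also have "\<dots> = sum (energy_summand b (delta x) u) (Pair x ` N)
      + sum (energy_summand b (delta x) u) ((\<lambda>y. (y, x)) ` N)"
    unfolding S_def using N x by (intro sum.union_disjoint) auto
  also have "sum (energy_summand b (delta x) u) (Pair x ` N) = laplacian b u x"
    unfolding laplacian_def N_def[symmetric] using x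
    by (subst sum.reindex) (auto simp: inj_on_def energy_summand_def delta_def intro!: sum.cong)
  also have "sum (energy_summand b (delta x) u) ((\<lambda>y. (y, x)) ` N) = laplacian b u x"
    unfolding laplacian_def N_def[symmetric] using x b
    by (subst sum.reindex) (auto simp: inj_on_def energy_summand_def delta_def conductance_def
        algebra_simps intro!: sum.cong)
  finally show "energy b (delta x) u = laplacian b u x" by (simp add: energy_eq_infsum_summand)
qed

lemma connected_network_if_conductance: "conductance c \<Longrightarrow> net_connected c \<Longrightarrow> connected_network c"
  by (simp add: connected_network_def connected_network_axioms_def energy_space_if_conductance)

lemma represents_reprod:
  assumes "conductance c" and "net_connected c"
  shows "represents c o0 (\<lambda>u. u x - u o0) (reprod c o0 x)"
proof -
  interpret connected_network c using assms by (rule connected_network_if_conductance)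
  interpret bounded_energy_functional c "\<lambda>u. u x - u o0"
    by unfold_locales (use difference_bound[of x o0] in \<open>auto simp: algebra_simps\<close>)
  show ?thesis using represents_The unfolding reprod_def represents_def .
qed

lemma represents_incl_adj:
  assumes b: "conductance b" and c: "conductance c" and le: "\<And>x y. b x y \<le> c x y"
    and "net_connected c" and f: "finite_energy b f"
  shows "represents c o0 (energy b f) (incl_adj c b o0 f)"
proof -
  interpret b: energy_space b using b by (rule energy_space_if_conductance)
  interpret connected_network c using c \<open>net_connected c\<close> by (rule connected_network_if_conductance)
  note mono = finite_energy_mono[OF b.nonneg le]
  interpret bounded_energy_functional c "energy b f"
  proof
    fix u v :: "'a \<Rightarrow> complex" and a :: complex
    assume u: "finite_energy c u"
    show "energy b f (\<lambda>x. a * u x) = a * energy b f u"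
      using b.energy_scale_right[OF f mono(1)[OF u]] .
    assume v: "finite_energy c v"
    show "energy b f (\<lambda>x. u x + v x) = energy b f u + energy b f v"
      using b.energy_add_right[OF f mono(1)[OF u] mono(1)[OF v]] .
  next
    have "cmod (energy b f u) \<le> sqrt (total_energy b f / 4) * sqrt (total_energy c u)"
      if u: "finite_energy c u" for u
    proof -
      have "(cmod (energy b f u))\<^sup>2 \<le> total_energy b f / 2 * (total_energy b u / 2)"
        by (rule b.energy_Cauchy_Schwarz[OF f mono(1)[OF u]])
      also have "\<dots> \<le> total_energy b f / 4 * total_energy c u"
        using mono(2)[OF u] b.total_energy_nonneg[of f] by (simp add: mult_left_mono)
      finally show ?thesis by (simp add: real_le_rsqrt real_sqrt_mult[symmetric])
    qed
    then show "\<exists>K. \<forall>u. finite_energy c u \<longrightarrow> cmod (energy b f u) \<le> K * sqrt (total_energy c u)"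
      by blast
  qed
  show ?thesis using represents_The unfolding incl_adj_def represents_def .
qed

lemma (in energy_space) lap_adj_graph_add_scaled:
  assumes "(f, z) \<in> lap_adj_graph c b" and "(w, z') \<in> lap_adj_graph c b"
  shows "((\<lambda>y. a * f y + w y), (\<lambda>y. a * z y + z' y)) \<in> lap_adj_graph c b"
proof -
  have f: "finite_energy c f" and z: "finite_energy c z"
    and fz: "\<And>u. u \<in> lap_dom c b \<Longrightarrow> energy c z u = energy c f (laplacian b u)"
    using assms(1) by (auto simp: lap_adj_graph_def)
  have w: "finite_energy c w" and z': "finite_energy c z'"
    and wz': "\<And>u. u \<in> lap_dom c b \<Longrightarrow> energy c z' u = energy c w (laplacian b u)"
    using assms(2) by (auto simp: lap_adj_graph_def)
  have "energy c (\<lambda>y. a * z y + z' y) u = energy c (\<lambda>y. a * f y + w y) (laplacian b u)"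
    if u: "u \<in> lap_dom c b" for u
  proof -
    have "finite_energy c u" "finite_energy c (laplacian b u)" using u by (auto simp: lap_dom_def)
    then show ?thesis
      by (simp add: energy_add_left energy_scale_left finite_energy_scale f z w z' fz[OF u] wz'[OF u])
  qed
  moreover have "finite_energy c (\<lambda>y. a * f y + w y)" "finite_energy c (\<lambda>y. a * z y + z' y)"
    by (intro finite_energy_add finite_energy_scale f z w z')+
  ultimately show ?thesis by (simp add: lap_adj_graph_def)
qed

lemma (in energy_space) lap_adj_graph_sum:
  assumes "finite F" and "\<And>f. f \<in> F \<Longrightarrow> (f, Z f) \<in> lap_adj_graph c b"
  shows "((\<lambda>y. \<Sum>f\<in>F. a f * f y), (\<lambda>y. \<Sum>f\<in>F. a f * Z f y)) \<in> lap_adj_graph c b"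
  using assms
proof (induction F rule: finite_induct)
  case empty
  show ?case by (simp add: lap_adj_graph_def)
next
  case (insert f F)
  then show ?case by (simp add: lap_adj_graph_add_scaled)
qed

lemma reprod_incl_adj_in_lap_adj_graph:
  assumes b: "conductance b" and c: "conductance c" and le: "\<And>x y. b x y \<le> c x y"
    and "locally_finite b" and "net_connected c"
  shows "(reprod c o0 x, incl_adj c b o0 (\<lambda>y. delta x y - delta o0 y)) \<in> lap_adj_graph c b"
proof -
  interpret b: energy_space b using b by (rule energy_space_if_conductance)
  interpret energy_space c using c by (rule energy_space_if_conductance)
  have deltas: "finite_energy b (delta x)" "finite_energy b (delta o0)"
    using b \<open>locally_finite b\<close> by (rule finite_energy_delta)+
  note R = represents_reprod[OF c \<open>net_connected c\<close>, of o0 x]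
  note I = represents_incl_adj[OF b c le \<open>net_connected c\<close> b.finite_energy_diff[OF deltas], of o0]
  have "energy c (incl_adj c b o0 (\<lambda>y. delta x y - delta o0 y)) u
      = energy c (reprod c o0 x) (laplacian b u)" if "u \<in> lap_dom c b" for u
  proof -
    have u: "finite_energy c u" "finite_energy c (laplacian b u)" using that by (auto simp: lap_dom_def)
    have "energy c (incl_adj c b o0 (\<lambda>y. delta x y - delta o0 y)) u
        = energy b (delta x) u - energy b (delta o0) u"
      using I u b.energy_diff_left[OF deltas finite_energy_mono(1)[OF b.nonneg le u(1)]]
      by (simp add: represents_def)
    also have "\<dots> = laplacian b u x - laplacian b u o0"
      using b \<open>locally_finite b\<close> by (simp add: energy_delta)
    also have "\<dots> = energy c (reprod c o0 x) (laplacian b u)"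
      using R u by (simp add: represents_def)
    finally show ?thesis .
  qed
  then show ?thesis using R I by (simp add: lap_adj_graph_def represents_def)
qed

theorem lemma3p19:
  fixes c b :: "'a::countable \<Rightarrow> 'a \<Rightarrow> real" and o0 :: 'a
  assumes "conductance c" and "conductance b"
    and "\<And>x y. b x y \<le> c x y"
    and "locally_finite c" and "net_connected c"
    and "locally_finite b" and "net_connected b"
  shows "lin_span (range (reprod c o0)) \<subseteq> lap_adj_dom c b \<and>
    (\<forall>x. (reprod c o0 x, incl_adj c b o0 (\<lambda>y. delta x y - delta o0 y)) \<in> lap_adj_graph c b)"
proof
  interpret energy_space c using assms(1) by (rule energy_space_if_conductance)
  define Z where "Z f = incl_adj c b o0 (\<lambda>y. delta (inv (reprod c o0) f) y - delta o0 y)" for f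
  have graph: "(reprod c o0 x, incl_adj c b o0 (\<lambda>y. delta x y - delta o0 y)) \<in> lap_adj_graph c b" for x
    by (rule reprod_incl_adj_in_lap_adj_graph[OF assms(2,1,3,6,5)])
  then show "\<forall>x. (reprod c o0 x, incl_adj c b o0 (\<lambda>y. delta x y - delta o0 y)) \<in> lap_adj_graph c b" ..
  show "lin_span (range (reprod c o0)) \<subseteq> lap_adj_dom c b"
  proof
    fix w assume "w \<in> lin_span (range (reprod c o0))"
    then obtain F a where w: "w = (\<lambda>y. \<Sum>f\<in>F. a f * f y)" and F: "finite F" "F \<subseteq> range (reprod c o0)"
      by (auto simp: lin_span_def)
    have "(f, Z f) \<in> lap_adj_graph c b" if "f \<in> F" for f
      using graph[of "inv (reprod c o0) f"] that F(2) by (auto simp: Z_def f_inv_into_f)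
    from lap_adj_graph_sum[OF F(1) this] show "w \<in> lap_adj_dom c b"
      unfolding lap_adj_dom_def w by blast
  qed
qed

end
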